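(* Let $a,b\in C\ell_2\setminus\mathbb{R}$ with $a_0=b_0$ and $G(a)=G(b)$, and let $F=L(a)-R(b)$. Then the Moore–Penrose inverse of the real matrix $F$ is $$F^+=\frac{L(a')-R(b')}{2(|Cim(a)|^2+|Cim(b)|^2)}.$$
   Context: $C\ell_2$ is the 4-dimensional real associative algebra with basis $1,e_1,e_2,e_3$ and multiplication $e_1^2=e_2^2=1$, $e_3^2=-1$, $e_1e_2=e_3=-e_2e_1$, $e_1e_3=e_2=-e_3e_1$, $e_3e_2=e_1=-e_2e_3$; $\mathbb{R}$ is identified with $\mathbb{R}\cdot 1$. Write $a=a_0+a_1e_1+a_2e_2+a_3e_3$, $b=b_0+b_1e_1+b_2e_2+b_3e_3$. Notation: $a'=a_0+a_1e_1+a_2e_2-a_3e_3$, $G(a)=a_1^2+a_2^2-a_3^2$, $|Cim(a)|^2=a_1^2+a_2^2+a_3^2$, $$L(a)=\begin{pmatrix} a_0&a_1&a_2&-a_3\\ a_1&a_0&a_3&-a_2\\ a_2&-a_3&a_0&a_1\\ a_3&-a_2&a_1&a_0\end{pmatrix},\qquad R(a)=\begin{pmatrix} a_0&a_1&a_2&-a_3\\ a_1&a_0&-a_3&a_2\\ a_2&a_3&a_0&-a_1\\ a_3&a_2&-a_1&a_0\end{pmatrix}.$$ The Moore–Penrose inverse $F^+$ of a real matrix $F$ is the unique $X$ with $FXF=F$, $XFX=X$, $(FX)^T=FX$, $(XF)^T=XF$. *)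

theory Defs
  imports "HOL-Analysis.Analysis"
begin

text \<open>Elements a = a0 + a1 e1 + a2 e2 + a3 e3 of the Clifford algebra Cl_2, given by
  their four real coordinates.\<close>
datatype cl2 = Cl (c0: real) (c1: real) (c2: real) (c3: real)

definition cl2_of_real :: "real \<Rightarrow> cl2" where
  "cl2_of_real r = Cl r 0 0 0"

definition cl2_reals :: "cl2 set" where
  "cl2_reals = range cl2_of_real"

definition cl2_conj' :: "cl2 \<Rightarrow> cl2" where
  "cl2_conj' a = Cl (c0 a) (c1 a) (c2 a) (- c3 a)"

definition G :: "cl2 \<Rightarrow> real" where
  "G a = (c1 a)^2 + (c2 a)^2 - (c3 a)^2"

definition Cim_norm2 :: "cl2 \<Rightarrow> real" where
  "Cim_norm2 a = (c1 a)^2 + (c2 a)^2 + (c3 a)^2"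

text \<open>4x4 real matrices; row i is (vector [...]) with entries indexed 1..4
  (the index type 4 has elements 1,2,3,4=0).\<close>
definition Lmat :: "cl2 \<Rightarrow> real^4^4" where
  "Lmat a = vector [
     vector [c0 a, c1 a, c2 a, - c3 a],
     vector [c1 a, c0 a, c3 a, - c2 a],
     vector [c2 a, - c3 a, c0 a, c1 a],
     vector [c3 a, - c2 a, c1 a, c0 a]]"

definition Rmat :: "cl2 \<Rightarrow> real^4^4" where
  "Rmat a = vector [
     vector [c0 a, c1 a, c2 a, - c3 a],
     vector [c1 a, c0 a, - c3 a, c2 a],
     vector [c2 a, c3 a, c0 a, - c1 a],
     vector [c3 a, c2 a, - c1 a, c0 a]]"

definition is_mp_inverse :: "real^'n^'m \<Rightarrow> real^'m^'n \<Rightarrow> bool" where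
  "is_mp_inverse F X \<longleftrightarrow>
     F ** X ** F = F \<and> X ** F ** X = X \<and>
     transpose (F ** X) = F ** X \<and> transpose (X ** F) = X ** F"

definition mp_inverse :: "real^'n^'m \<Rightarrow> real^'m^'n" where
  "mp_inverse F = (THE X. is_mp_inverse F X)"

end

theory Submission
  imports Defs
begin

text \<open>Since \<open>L(a)\<^sup>T = L(a')\<close> and \<open>R(b)\<^sup>T = R(b')\<close>, the claimed inverse is \<open>F\<^sup>T / s\<close>
  with \<open>s = 2(|Cim(a)|\<^sup>2 + |Cim(b)|\<^sup>2)\<close>. Any real matrix with \<open>F F\<^sup>T F = s F\<close> and
  \<open>s \<noteq> 0\<close> has Moore--Penrose inverse \<open>F\<^sup>T / s\<close>: the two symmetry conditions hold
  for every matrix of this shape, and the other two reduce to \<open>F F\<^sup>T F = s F\<close> and its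
  transpose. For \<open>F = L(a) - R(b)\<close> with \<open>a\<^sub>0 = b\<^sub>0\<close> that identity is a polynomial
  computation using \<open>G(a) = G(b)\<close>, and \<open>s > 0\<close> because \<open>a\<close> is not real.\<close>

lemma vector_4 [simp]:
  "(vector [x, y, z, w] :: 'a::zero^4) $ 1 = x"
  "(vector [x, y, z, w] :: 'a::zero^4) $ 2 = y"
  "(vector [x, y, z, w] :: 'a::zero^4) $ 3 = z"
  "(vector [x, y, z, w] :: 'a::zero^4) $ 4 = w"
  unfolding vector_def by simp_all

lemma transpose_diff: "transpose (A - B) = transpose A - transpose (B :: 'a::ab_group_add^'n^'m)"
  by (simp add: transpose_def vec_eq_iff)

lemma is_mp_inverse_unique:
  fixes F :: "real^'n^'m"
  assumes X: "is_mp_inverse F X" and Y: "is_mp_inverse F Y"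
  shows "X = Y"
proof -
  from X have X1: "F ** X ** F = F" and X2: "X ** F ** X = X"
    and X3: "transpose (F ** X) = F ** X" and X4: "transpose (X ** F) = X ** F"
    unfolding is_mp_inverse_def by auto
  from Y have Y1: "F ** Y ** F = F" and Y2: "Y ** F ** Y = Y"
    and Y3: "transpose (F ** Y) = F ** Y" and Y4: "transpose (Y ** F) = Y ** F"
    unfolding is_mp_inverse_def by auto
  have FX: "F ** X = F ** Y"
  proof -
    have "F ** X = transpose ((F ** Y) ** (F ** X))"
      using X3 Y1 by (simp add: matrix_mul_assoc)
    also have "\<dots> = (F ** X) ** (F ** Y)"
      using X3 Y3 by (simp add: matrix_transpose_mul)
    also have "\<dots> = F ** Y"
      using X1 by (simp add: matrix_mul_assoc)
    finally show ?thesis .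
  qed
  have XF: "X ** F = Y ** F"
  proof -
    have "X ** F = transpose ((X ** F) ** (Y ** F))"
      using X4 Y1 by (metis matrix_mul_assoc)
    also have "\<dots> = (Y ** F) ** (X ** F)"
      using X4 Y4 by (simp add: matrix_transpose_mul)
    also have "\<dots> = Y ** F"
      using X1 by (metis matrix_mul_assoc)
    finally show ?thesis .
  qed
  have "X = (X ** F) ** X"
    using X2 by simp
  also have "\<dots> = (Y ** F) ** Y"
    using FX XF by (simp flip: matrix_mul_assoc)
  also have "\<dots> = Y"
    using Y2 by simp
  finally show ?thesis .
qed

lemma mp_inverse_eqI:
  fixes F :: "real^'n^'m"
  assumes "is_mp_inverse F X"
  shows "mp_inverse F = X"
  unfolding mp_inverse_def
  using assms is_mp_inverse_unique by blast

lemma is_mp_inverse_scaled_transpose: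
  fixes F :: "real^'n^'m"
  assumes FtF: "F ** transpose F ** F = s *\<^sub>R F" and "s \<noteq> 0"
  shows "is_mp_inverse F ((1 / s) *\<^sub>R transpose F)"
proof -
  have tFtF: "transpose F ** F ** transpose F = s *\<^sub>R transpose F"
    using arg_cong[OF FtF, of transpose]
    by (simp add: matrix_transpose_mul matrix_mul_assoc transpose_scalar)
  have sym_FFt: "transpose (F ** transpose F) = F ** transpose F"
    and sym_FtF: "transpose (transpose F ** F) = transpose F ** F"
    by (simp_all add: matrix_transpose_mul)
  show ?thesis
    unfolding is_mp_inverse_def
    using FtF tFtF sym_FFt sym_FtF \<open>s \<noteq> 0\<close>
    by (simp add: matrix_scalar_ac transpose_scalar flip: scalar_matrix_assoc)
qed

lemma Lmat_transpose: "transpose (Lmat a) = Lmat (cl2_conj' a)"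
  by (simp add: vec_eq_iff forall_4 transpose_def Lmat_def cl2_conj'_def)

lemma Rmat_transpose: "transpose (Rmat a) = Rmat (cl2_conj' a)"
  by (simp add: vec_eq_iff forall_4 transpose_def Rmat_def cl2_conj'_def)

lemma Cim_norm2_pos:
  assumes "a \<notin> cl2_reals"
  shows "0 < Cim_norm2 a"
proof (rule ccontr)
  assume "\<not> 0 < Cim_norm2 a"
  then have "c1 a = 0" "c2 a = 0" "c3 a = 0"
    unfolding Cim_norm2_def by (smt (verit) zero_le_power2 zero_less_power2)+
  then have "a = cl2_of_real (c0 a)"
    by (cases a) (simp add: cl2_of_real_def)
  with assms show False
    unfolding cl2_reals_def by blast
qed

text \<open>In the coordinates \<open>p = Cim(a) - Cim(b)\<close>, \<open>q = Cim(a) + Cim(b)\<close> the hypothesis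
  \<open>G(a) = G(b)\<close> reads \<open>p\<^sub>1 q\<^sub>1 + p\<^sub>2 q\<^sub>2 - p\<^sub>3 q\<^sub>3 = 0\<close>, and every entry of
  \<open>F F\<^sup>T F - s F\<close> is a polynomial multiple of this form.\<close>
lemma Lmat_minus_Rmat_mult_transpose_mult:
  assumes "c0 a = c0 b" and "G a = G b"
  shows "(Lmat a - Rmat b) ** transpose (Lmat a - Rmat b) ** (Lmat a - Rmat b)
    = (2 * (Cim_norm2 a + Cim_norm2 b)) *\<^sub>R (Lmat a - Rmat b)"
proof -
  obtain a0 a1 a2 a3 b1 b2 b3 where a: "a = Cl a0 a1 a2 a3" and b: "b = Cl a0 b1 b2 b3"
    using assms(1) by (metis cl2.collapse)
  have g: "a1^2 + a2^2 - a3^2 = b1^2 + b2^2 - b3^2"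
    using assms(2) by (simp add: a b G_def)
  show ?thesis
    unfolding a b
    by (simp add: vec_eq_iff forall_4 matrix_matrix_mult_def sum_4 transpose_def
        Lmat_def Rmat_def Cim_norm2_def)
      (intro conjI; ((simp add: algebra_simps; fail) | (insert g, algebra)))
qed

theorem lemma5p2:
  fixes a b :: cl2
  assumes "a \<notin> cl2_reals" and "b \<notin> cl2_reals"
    and "c0 a = c0 b" and "G a = G b"
  shows "mp_inverse (Lmat a - Rmat b) =
    (1 / (2 * (Cim_norm2 a + Cim_norm2 b))) *\<^sub>R (Lmat (cl2_conj' a) - Rmat (cl2_conj' b))"
proof -
  have "2 * (Cim_norm2 a + Cim_norm2 b) \<noteq> 0"
    using Cim_norm2_pos[OF assms(1)] Cim_norm2_pos[OF assms(2)] by simp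
  then have "is_mp_inverse (Lmat a - Rmat b)
      ((1 / (2 * (Cim_norm2 a + Cim_norm2 b))) *\<^sub>R transpose (Lmat a - Rmat b))"
    using Lmat_minus_Rmat_mult_transpose_mult[OF assms(3,4)]
    by (rule is_mp_inverse_scaled_transpose[rotated])
  then show ?thesis
    by (simp add: mp_inverse_eqI transpose_diff Lmat_transpose Rmat_transpose)
qed

end
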